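(* Let $p \geq 2$. Consider parameter tuples $(\pi, \alpha, u_1, \dots, u_p, h)$ where $\pi \in (0,1)$, $\alpha \in \mathbb{R}$, $h$ is a probability density on $\mathbb{R}^p$, and $u_j$ are real functions, such that the following hold. The density $h$ and the density \[ g(\mathbf{x}) = \exp\Big\{\alpha + \sum_{j=1}^p u_j(x_j)\Big\} h(\mathbf{x}) \] share a common compact support $\mathcal{T} = \mathcal{T}_1 \times \cdots \times \mathcal{T}_p$, where $\mathcal{T}_j$ is the support of $u_j$ for $j = 1, \dots, p$. Each $u_j$ satisfies the centering constraint $\int u_j(x_j)\, dx_j = 0$. The normalization $\int \exp\{\alpha + \sum_{j=1}^p u_j(x_j)\} h(\mathbf{x})\, d\mathbf{x} = 1$ holds. Finally, there exist two distinct indices $j, k \in \{1,\dots,p\}$ such that $u_j$ and $u_k$ are both non-constant on their respective supports. Such a tuple generates the labeled-sample density $g$ and the unlabeled-sample density $f = \pi g + (1-\pi) h$. Then the model uniquely determines $(\pi, \alpha, u_1, \dots, u_p)$. That is, if two such tuples generate the same pair $(g, f)$, then they have the same values of $\pi$, $\alpha$, $u_1, \dots, u_p$.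
   Context: Positive-unlabeled (PU) data under the "selected completely at random" assumption. The labeled sample $\mathbf{x}_1, \dots, \mathbf{x}_{n_0}$ is drawn from the positive-class density $g(\mathbf{x})$. The unlabeled sample $\mathbf{x}_{n_0+1}, \dots, \mathbf{x}_n$ is drawn from the mixture $\pi g(\mathbf{x}) + (1-\pi) h(\mathbf{x})$, where $h$ is the negative-class density and $\pi \in (0,1)$ is the mixture proportion. The generalized additive exponential tilting (GAET) model assumes \[ \log\{g(\mathbf{x})/h(\mathbf{x})\} = \alpha + \sum_{j=1}^p u_j(x_j), \] where $x_j$ is the $j$-th coordinate of $\mathbf{x} \in \mathbb{R}^p$. Each $u_j$ is an unspecified function satisfying $\int u_j(x_j)\, dx_j = 0$. The constant $\alpha$ ensures $\int \exp\{\alpha + \sum_j u_j(x_j)\} h(\mathbf{x})\, d\mathbf{x} = 1$. *)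

theory Defs
  imports "HOL-Analysis.Analysis"
begin

text \<open>Points of R^p are vectors of type real^'n with CARD('n) = p.
  The additive components are u :: 'n => real => real (u j is the j-th function).\<close>

definition gaet_g :: "real \<Rightarrow> ('n::finite \<Rightarrow> real \<Rightarrow> real) \<Rightarrow> (real^'n \<Rightarrow> real) \<Rightarrow> real^'n \<Rightarrow> real" where
  "gaet_g \<alpha> u h x = exp (\<alpha> + (\<Sum>j\<in>UNIV. u j (x $ j))) * h x"

definition gaet_f :: "real \<Rightarrow> real \<Rightarrow> ('n::finite \<Rightarrow> real \<Rightarrow> real) \<Rightarrow> (real^'n \<Rightarrow> real) \<Rightarrow> real^'n \<Rightarrow> real" where
  "gaet_f \<pi> \<alpha> u h x = \<pi> * gaet_g \<alpha> u h x + (1 - \<pi>) * h x"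

definition fsupp :: "(real \<Rightarrow> real) \<Rightarrow> real set" where
  "fsupp v = closure {t. v t \<noteq> 0}"

definition gaet_admissible :: "real \<Rightarrow> real \<Rightarrow> ('n::finite \<Rightarrow> real \<Rightarrow> real) \<Rightarrow> (real^'n \<Rightarrow> real) \<Rightarrow> bool" where
  "gaet_admissible \<pi> \<alpha> u h \<longleftrightarrow>
     0 < \<pi> \<and> \<pi> < 1 \<and>
     h \<in> borel_measurable lborel \<and> (\<forall>x. 0 \<le> h x) \<and> (\<integral>\<^sup>+ x. ennreal (h x) \<partial>lborel) = 1 \<and>
     (let T = {x :: real^'n. \<forall>j. x $ j \<in> fsupp (u j)} in
        compact T \<and> {x. 0 < h x} = T \<and> {x. 0 < gaet_g \<alpha> u h x} = T) \<and>
     (\<forall>j. integrable lborel (u j) \<and> (\<integral>t. u j t \<partial>lborel) = 0) \<and>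
     (\<integral>\<^sup>+ x. ennreal (exp (\<alpha> + (\<Sum>j\<in>UNIV. u j (x $ j))) * h x) \<partial>lborel) = 1 \<and>
     (\<exists>j k. j \<noteq> k \<and>
        (\<exists>a\<in>fsupp (u j). \<exists>b\<in>fsupp (u j). u j a \<noteq> u j b) \<and>
        (\<exists>a\<in>fsupp (u k). \<exists>b\<in>fsupp (u k). u k a \<noteq> u k b))"

end

theory Submission
  imports Defs
begin

text \<open>Because h = exp (-(\<alpha> + \<Sum>j. u j (x j))) g, on the common support T the ratio f/g equals
  \<pi> + (1 - \<pi>) exp (-(\<alpha> + \<Sum>j. u j (x j))), and T is determined by g. Varying two coordinates
  along which the u j are non-constant, the exponential is a rank-one 2x2 table in those coordinates,
  and a rank-one table plus the constant \<pi> - \<pi>' is again rank one only if \<pi> = \<pi>'.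
  Then \<alpha> + \<Sum>j. u j (x j) = \<alpha>' + \<Sum>j. u' j (x j) on T, so u j - u' j is constant on the
  support of u j and zero off it. That support has positive Lebesgue measure (otherwise h would vanish
  almost everywhere), so the centering constraint forces the constant to be zero.\<close>

definition coord_product :: "('n \<Rightarrow> 'a set) \<Rightarrow> ('a^'n) set" where
  "coord_product S = {x. \<forall>j. x $ j \<in> S j}"

definition vec_upd :: "'a^'n \<Rightarrow> 'n \<Rightarrow> 'a \<Rightarrow> 'a^'n" where
  "vec_upd x l t = (\<chi> i. if i = l then t else x $ i)"

lemma vec_upd_nth: "vec_upd x l t $ i = (if i = l then t else x $ i)"
  by (simp add: vec_upd_def)

lemma vec_upd_in_coord_product_iff:
  "x \<in> coord_product S \<Longrightarrow> vec_upd x l t \<in> coord_product S \<longleftrightarrow> t \<in> S l"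
  by (force simp: coord_product_def vec_upd_nth)

lemma coord_product_eq_imp_factors_eq:
  assumes eq: "coord_product A = coord_product B" and ne: "coord_product A \<noteq> {}"
  shows "A = B"
proof
  fix l
  from ne obtain x where x: "x \<in> coord_product A" by blast
  have "t \<in> A l \<longleftrightarrow> t \<in> B l" for t
    using vec_upd_in_coord_product_iff[OF x] vec_upd_in_coord_product_iff[of x B] x eq by simp
  then show "A l = B l" by blast
qed

lemma sum_vec_upd:
  fixes \<phi> :: "'n::finite \<Rightarrow> 'a \<Rightarrow> 'b::ab_group_add"
  shows "(\<Sum>i\<in>UNIV. \<phi> i (vec_upd x l t $ i)) = (\<Sum>i\<in>UNIV. \<phi> i (x $ i)) + (\<phi> l t - \<phi> l (x $ l))"
proof -
  have "(\<Sum>i\<in>UNIV. \<phi> i (vec_upd x l t $ i))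
      = (\<Sum>i\<in>UNIV. \<phi> i (x $ i) + (if i = l then \<phi> l t - \<phi> l (x $ l) else 0))"
    by (rule sum.cong) (auto simp: vec_upd_nth)
  then show ?thesis by (simp add: sum.distrib)
qed

lemma additive_eq_on_coord_product_imp_diff_const:
  fixes \<phi> \<psi> :: "'n::finite \<Rightarrow> 'a \<Rightarrow> 'b::ab_group_add"
  assumes eq: "\<And>x. x \<in> coord_product S \<Longrightarrow>
      \<alpha> + (\<Sum>i\<in>UNIV. \<phi> i (x $ i)) = \<alpha>' + (\<Sum>i\<in>UNIV. \<psi> i (x $ i))"
    and x0: "x0 \<in> coord_product S" and t: "t \<in> S l"
  shows "\<phi> l t - \<psi> l t = \<phi> l (x0 $ l) - \<psi> l (x0 $ l)"
proof -
  have "vec_upd x0 l t \<in> coord_product S"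
    using vec_upd_in_coord_product_iff[OF x0] t by simp
  from eq[OF this] have "(\<alpha> + (\<Sum>i\<in>UNIV. \<phi> i (x0 $ i))) + (\<phi> l t - \<phi> l (x0 $ l))
      = (\<alpha>' + (\<Sum>i\<in>UNIV. \<psi> i (x0 $ i))) + (\<psi> l t - \<psi> l (x0 $ l))"
    by (simp add: sum_vec_upd add.assoc)
  with eq[OF x0] have "\<phi> l t - \<phi> l (x0 $ l) = \<psi> l t - \<psi> l (x0 $ l)"
    by simp
  then show ?thesis
    by (simp add: algebra_simps)
qed

lemma rank_one_2x2_shift_eq_zero:
  fixes \<delta> :: "'a::idom"
  assumes "x1 \<noteq> x2" "y1 \<noteq> y2"
    and "x1 * y1 + \<delta> = x1' * y1'" "x1 * y2 + \<delta> = x1' * y2'"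
    and "x2 * y1 + \<delta> = x2' * y1'" "x2 * y2 + \<delta> = x2' * y2'"
  shows "\<delta> = 0"
proof -
  have "(x1 * y1 + \<delta>) * (x2 * y2 + \<delta>) = (x1 * y2 + \<delta>) * (x2 * y1 + \<delta>)"
    unfolding assms(3-6) by (simp add: algebra_simps)
  then have "\<delta> * ((x1 - x2) * (y1 - y2)) = 0"
    by (simp add: algebra_simps)
  with assms(1,2) show ?thesis by simp
qed

lemma mixture_odds_eq_imp_weight_eq:
  fixes \<phi> \<psi> :: "'n::finite \<Rightarrow> real \<Rightarrow> real"
  assumes "\<pi> < 1" "j \<noteq> k" and x0: "x0 \<in> coord_product S"
    and s: "s1 \<in> S j" "s2 \<in> S j" "\<phi> j s1 \<noteq> \<phi> j s2"
    and t: "t1 \<in> S k" "t2 \<in> S k" "\<phi> k t1 \<noteq> \<phi> k t2"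
    and odds: "\<And>x. x \<in> coord_product S \<Longrightarrow>
      \<pi> + (1 - \<pi>) * exp (- (\<alpha> + (\<Sum>i\<in>UNIV. \<phi> i (x $ i))))
      = \<pi>' + (1 - \<pi>') * exp (- (\<alpha>' + (\<Sum>i\<in>UNIV. \<psi> i (x $ i))))"
  shows "\<pi> = \<pi>'"
proof -
  define y where "y s t = vec_upd (vec_upd x0 j s) k t" for s t
  have y_in: "y s t \<in> coord_product S" if "s \<in> S j" "t \<in> S k" for s t
    using that x0 by (simp add: y_def vec_upd_in_coord_product_iff)
  have exp_y: "exp (- (\<beta> + (\<Sum>i\<in>UNIV. \<theta> i (y s t $ i))))
      = exp (- (\<beta> + (\<Sum>i\<in>UNIV. \<theta> i (x0 $ i)) - \<theta> j (x0 $ j) - \<theta> k (x0 $ k)))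
        * exp (- \<theta> j s) * exp (- \<theta> k t)" for \<beta> and \<theta> :: "'n \<Rightarrow> real \<Rightarrow> real" and s t
    using \<open>j \<noteq> k\<close> unfolding y_def sum_vec_upd
    by (simp add: vec_upd_nth flip: exp_add)
  define X where "X \<theta> \<beta> p s =
      (1 - p) * exp (- (\<beta> + (\<Sum>i\<in>UNIV. \<theta> i (x0 $ i)) - \<theta> j (x0 $ j) - \<theta> k (x0 $ k)))
      * exp (- \<theta> j s)"
    for \<theta> :: "'n \<Rightarrow> real \<Rightarrow> real" and \<beta> p s :: real
  have grid: "X \<phi> \<alpha> \<pi> s * exp (- \<phi> k t) + (\<pi> - \<pi>') = X \<psi> \<alpha>' \<pi>' s * exp (- \<psi> k t)"
    if "s \<in> S j" "t \<in> S k" for s t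
    using odds[OF y_in[OF that]] unfolding exp_y X_def by (simp add: algebra_simps)
  have X_ne: "X \<phi> \<alpha> \<pi> s1 \<noteq> X \<phi> \<alpha> \<pi> s2"
    using \<open>\<pi> < 1\<close> s(3) by (simp add: X_def)
  have Y_ne: "exp (- \<phi> k t1) \<noteq> exp (- \<phi> k t2)"
    using t(3) by simp
  have "\<pi> - \<pi>' = 0"
    by (rule rank_one_2x2_shift_eq_zero[OF X_ne Y_ne grid[OF s(1) t(1)] grid[OF s(1) t(2)]
          grid[OF s(2) t(1)] grid[OF s(2) t(2)]])
  then show ?thesis by simp
qed

lemma null_sets_lborel_inner_Basis_vimage:
  fixes b :: "'a::euclidean_space"
  assumes b: "b \<in> Basis" and S: "S \<in> null_sets lborel"
  shows "{x::'a. x \<bullet> b \<in> S} \<in> null_sets lborel"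
proof -
  have S_sets: "S \<in> sets borel" and S0: "emeasure lborel S = 0"
    using S by auto
  define f where "f c = (if c = b then indicator S else (\<lambda>_::real. 1::ennreal))" for c :: 'a
  have cyl_sets: "{x::'a. x \<bullet> b \<in> S} \<in> sets lborel"
    using measurable_sets[of "\<lambda>x. x \<bullet> b" lborel borel S] S_sets by (simp add: vimage_def)
  have "indicator {x. x \<bullet> b \<in> S} x = (\<Prod>c\<in>Basis. f c (x \<bullet> c))" for x :: 'a
  proof -
    have "(\<Prod>c\<in>Basis. f c (x \<bullet> c)) = f b (x \<bullet> b) * (\<Prod>c\<in>Basis - {b}. f c (x \<bullet> c))"
      using b by (rule prod.remove[OF finite_Basis])
    also have "(\<Prod>c\<in>Basis - {b}. f c (x \<bullet> c)) = 1"
      by (rule prod.neutral) (simp add: f_def)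
    finally show ?thesis by (simp add: f_def indicator_def)
  qed
  then have "emeasure lborel {x::'a. x \<bullet> b \<in> S} = (\<integral>\<^sup>+x. (\<Prod>c\<in>Basis. f c (x \<bullet> c)) \<partial>lborel)"
    using cyl_sets by (simp flip: nn_integral_indicator)
  also have "\<dots> = (\<Prod>c\<in>Basis. \<integral>\<^sup>+x. f c x \<partial>lborel)"
    using S_sets by (intro nn_integral_lborel_prod) (auto simp: f_def)
  also have "\<dots> = 0"
    using b S_sets S0 by (intro prod_zero finite_Basis bexI[of _ b]) (simp_all add: f_def)
  finally show ?thesis
    using cyl_sets by (simp add: null_sets_def)
qed

lemma emeasure_coordinate_support_ne_zero:
  fixes h :: "'a::euclidean_space \<Rightarrow> real"
  assumes "b \<in> Basis" "S \<in> sets borel"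
    and supp: "\<And>x. h x \<noteq> 0 \<Longrightarrow> x \<bullet> b \<in> S"
    and "(\<integral>\<^sup>+x. ennreal (h x) \<partial>lborel) \<noteq> 0"
  shows "emeasure lborel S \<noteq> 0"
proof
  assume "emeasure lborel S = 0"
  with assms(1,2) have "{x. x \<bullet> b \<in> S} \<in> null_sets lborel"
    by (intro null_sets_lborel_inner_Basis_vimage) auto
  then have "AE x in lborel. h x = 0"
    by (rule AE_I') (auto dest: supp)
  then have "AE x in lborel. ennreal (h x) = 0"
    by eventually_elim simp
  from nn_integral_cong_AE[OF this] assms(4) show False
    by simp
qed

lemma eq_if_diff_const_on_set_and_integral_eq:
  fixes v w :: "'a \<Rightarrow> real"
  assumes "integrable M v" "integrable M w" "integral\<^sup>L M v = integral\<^sup>L M w"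
    and S: "S \<in> sets M" "emeasure M S \<noteq> 0"
    and on: "\<And>t. t \<in> S \<Longrightarrow> v t - w t = c" and off: "\<And>t. t \<notin> S \<Longrightarrow> v t = w t"
  shows "v = w"
proof -
  have diff: "(\<lambda>t. v t - w t) = (\<lambda>t. c * indicator S t)"
    using on off by (auto simp: fun_eq_iff indicator_def)
  have "c = 0"
  proof (rule ccontr)
    assume "c \<noteq> 0"
    have "(\<lambda>t. (v t - w t) / c) = indicator S"
      using fun_cong[OF diff] \<open>c \<noteq> 0\<close> by (simp add: fun_eq_iff)
    moreover have "integrable M (\<lambda>t. (v t - w t) / c)"
      using assms(1,2) by auto
    ultimately have "integrable M (indicator S :: 'a \<Rightarrow> real)"
      by simp
    with S have "emeasure M S = ennreal (measure M S)"
      by (simp add: integrable_indicator_iff emeasure_eq_ennreal_measure less_top)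
    moreover have "c * measure M S = 0"
      using assms(1-3) S(1) arg_cong[OF diff, of "integral\<^sup>L M"] by simp
    ultimately show False
      using \<open>c \<noteq> 0\<close> S(2) by simp
  qed
  with diff show ?thesis
    by (auto simp: fun_eq_iff dest: fun_cong)
qed

lemma not_in_fsupp_imp_zero: "t \<notin> fsupp v \<Longrightarrow> v t = 0"
  using closure_subset by (force simp: fsupp_def)

lemma fsupp_sets_borel: "fsupp v \<in> sets borel"
  by (simp add: fsupp_def borel_closed)

lemma gaet_f_eq_odds_mult_g:
  "gaet_f \<pi> \<alpha> u h x = (\<pi> + (1 - \<pi>) * exp (- (\<alpha> + (\<Sum>j\<in>UNIV. u j (x $ j))))) * gaet_g \<alpha> u h x"
proof -
  define e where "e = \<alpha> + (\<Sum>j\<in>UNIV. u j (x $ j))"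
  show ?thesis
    unfolding gaet_f_def gaet_g_def e_def[symmetric] by (simp add: exp_minus field_simps)
qed

lemma gaet_admissibleD:
  assumes "gaet_admissible \<pi> \<alpha> u h"
  shows "\<pi> < 1" "\<And>x. 0 \<le> h x" "(\<integral>\<^sup>+ x. ennreal (h x) \<partial>lborel) = 1"
    and "{x. 0 < h x} = coord_product (\<lambda>j. fsupp (u j))"
    and "{x. 0 < gaet_g \<alpha> u h x} = coord_product (\<lambda>j. fsupp (u j))"
    and "\<And>j. integrable lborel (u j)" "\<And>j. (\<integral>t. u j t \<partial>lborel) = 0"
    and "\<exists>j k. j \<noteq> k \<and>
        (\<exists>a\<in>fsupp (u j). \<exists>b\<in>fsupp (u j). u j a \<noteq> u j b) \<and>
        (\<exists>a\<in>fsupp (u k). \<exists>b\<in>fsupp (u k). u k a \<noteq> u k b)"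
  using assms by (simp_all add: gaet_admissible_def coord_product_def Let_def)

lemma gaet_support_nonempty:
  assumes "gaet_admissible \<pi> \<alpha> u h"
  shows "coord_product (\<lambda>j. fsupp (u j)) \<noteq> {}"
proof
  assume "coord_product (\<lambda>j. fsupp (u j)) = {}"
  then have "h x = 0" for x
    using gaet_admissibleD(2,4)[OF assms] by (metis empty_iff mem_Collect_eq order_le_less)
  then show False
    using gaet_admissibleD(3)[OF assms] by simp
qed

lemma gaet_fsupp_not_null:
  fixes u :: "'n::finite \<Rightarrow> real \<Rightarrow> real"
  assumes "gaet_admissible \<pi> \<alpha> u h"
  shows "emeasure lborel (fsupp (u l)) \<noteq> 0"
proof (rule emeasure_coordinate_support_ne_zero)
  show "axis l 1 \<in> (Basis :: (real^'n) set)"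
    by (simp add: axis_in_Basis_iff)
  show "x \<bullet> axis l 1 \<in> fsupp (u l)" if "h x \<noteq> 0" for x
  proof -
    have "0 < h x"
      using that gaet_admissibleD(2)[OF assms, of x] by simp
    then have "x \<in> coord_product (\<lambda>j. fsupp (u j))"
      using gaet_admissibleD(4)[OF assms] by blast
    then show ?thesis
      by (simp add: coord_product_def flip: cart_eq_inner_axis)
  qed
  show "(\<integral>\<^sup>+x. ennreal (h x) \<partial>lborel) \<noteq> 0"
    using gaet_admissibleD(3)[OF assms] by simp
qed (rule fsupp_sets_borel)

lemma gaet_same_g_imp_same_fsupp:
  assumes "gaet_admissible \<pi> \<alpha> u h" "gaet_admissible \<pi>' \<alpha>' u' h'"
    and "gaet_g \<alpha> u h = gaet_g \<alpha>' u' h'"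
  shows "fsupp (u l) = fsupp (u' l)"
proof -
  have "(\<lambda>j. fsupp (u j)) = (\<lambda>j. fsupp (u' j))"
    using gaet_admissibleD(5)[OF assms(1)] gaet_admissibleD(5)[OF assms(2)] assms(3)
      gaet_support_nonempty[OF assms(1)]
    by (intro coord_product_eq_imp_factors_eq) auto
  then show ?thesis by meson
qed

lemma gaet_odds_eq:
  assumes "gaet_admissible \<pi> \<alpha> u h"
    and "gaet_g \<alpha> u h = gaet_g \<alpha>' u' h'" "gaet_f \<pi> \<alpha> u h = gaet_f \<pi>' \<alpha>' u' h'"
    and "x \<in> coord_product (\<lambda>j. fsupp (u j))"
  shows "\<pi> + (1 - \<pi>) * exp (- (\<alpha> + (\<Sum>j\<in>UNIV. u j (x $ j))))
    = \<pi>' + (1 - \<pi>') * exp (- (\<alpha>' + (\<Sum>j\<in>UNIV. u' j (x $ j))))"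
proof -
  have "0 < gaet_g \<alpha> u h x"
    using gaet_admissibleD(5)[OF assms(1)] assms(4) by blast
  moreover have "gaet_f \<pi> \<alpha> u h x = gaet_f \<pi>' \<alpha>' u' h' x"
    using assms(3) by simp
  ultimately show ?thesis
    unfolding gaet_f_eq_odds_mult_g assms(2) by simp
qed

lemma gaet_mixture_weight_eq:
  assumes "gaet_admissible \<pi> \<alpha> u h"
    and "gaet_g \<alpha> u h = gaet_g \<alpha>' u' h'" "gaet_f \<pi> \<alpha> u h = gaet_f \<pi>' \<alpha>' u' h'"
  shows "\<pi> = \<pi>'"
proof -
  obtain j k s1 s2 t1 t2 where jk: "j \<noteq> k"
    and s: "s1 \<in> fsupp (u j)" "s2 \<in> fsupp (u j)" "u j s1 \<noteq> u j s2"
    and t: "t1 \<in> fsupp (u k)" "t2 \<in> fsupp (u k)" "u k t1 \<noteq> u k t2"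
    using gaet_admissibleD(8)[OF assms(1)] by blast
  obtain x0 where x0: "x0 \<in> coord_product (\<lambda>j. fsupp (u j))"
    using gaet_support_nonempty[OF assms(1)] by blast
  show ?thesis
    using mixture_odds_eq_imp_weight_eq[OF gaet_admissibleD(1)[OF assms(1)] jk x0 s t
        gaet_odds_eq[OF assms]] .
qed

theorem theorem1:
  fixes \<pi> \<alpha> \<pi>' \<alpha>' :: real
    and u u' :: "'n::finite \<Rightarrow> real \<Rightarrow> real"
    and h h' :: "real^'n \<Rightarrow> real"
  assumes "CARD('n) \<ge> 2"
    and "gaet_admissible \<pi> \<alpha> u h"
    and "gaet_admissible \<pi>' \<alpha>' u' h'"
    and "gaet_g \<alpha> u h = gaet_g \<alpha>' u' h'"
    and "gaet_f \<pi> \<alpha> u h = gaet_f \<pi>' \<alpha>' u' h'"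
  shows "\<pi> = \<pi>' \<and> \<alpha> = \<alpha>' \<and> (\<forall>j. u j = u' j)"
proof -
  let ?T = "coord_product (\<lambda>j. fsupp (u j))"
  have \<pi>_eq: "\<pi> = \<pi>'"
    using gaet_mixture_weight_eq[OF assms(2,4,5)] .
  have exponent_eq: "\<alpha> + (\<Sum>j\<in>UNIV. u j (x $ j)) = \<alpha>' + (\<Sum>j\<in>UNIV. u' j (x $ j))"
    if "x \<in> ?T" for x
    using gaet_odds_eq[OF assms(2,4,5) that] \<pi>_eq gaet_admissibleD(1)[OF assms(2)] by simp
  obtain x0 where x0: "x0 \<in> ?T"
    using gaet_support_nonempty[OF assms(2)] by blast
  have u_eq: "u l = u' l" for l
  proof (rule eq_if_diff_const_on_set_and_integral_eq[where M = lborel])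
    show "u l t - u' l t = u l (x0 $ l) - u' l (x0 $ l)" if "t \<in> fsupp (u l)" for t
      using additive_eq_on_coord_product_imp_diff_const[where \<phi> = u and \<psi> = u',
          OF exponent_eq x0 that] .
    show "t \<notin> fsupp (u l) \<Longrightarrow> u l t = u' l t" for t
      using gaet_same_g_imp_same_fsupp[OF assms(2-4)] not_in_fsupp_imp_zero by metis
  qed (use gaet_admissibleD(6,7)[OF assms(2)] gaet_admissibleD(6,7)[OF assms(3)]
         gaet_fsupp_not_null[OF assms(2)] fsupp_sets_borel in auto)
  then have "\<alpha> = \<alpha>'"
    using exponent_eq[OF x0] by simp
  with \<pi>_eq u_eq show ?thesis by blast
qed

end
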